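(* Let $E$ be a finite set, $\mathcal{F}\subseteq 2^E$ a downward-closed family, $b_1,\dots,b_\ell\in\mathbb{R}_{\ge0}^{|E|}$, and $f(\boldsymbol{w})=\max_{S\in\mathcal{F}}\max_{i\in[\ell]}\langle b_i,\boldsymbol{w}_S\rangle$ for $\boldsymbol{w}\in\mathbb{R}_{\ge0}^{|E|}$. Let $L=\max_{S\in\mathcal{F},\,i\in[\ell],\,j\in E}a^S_{ij}$, where $a^S_{ij}=b_{ij}\cdot\mathbf{1}_{j\in S}$, and assume $L>0$. Then: (1) $f$ is $L$-Lipschitz: $|f(\boldsymbol{u})-f(\boldsymbol{v})|\le L\|\boldsymbol{u}-\boldsymbol{v}\|_1$; (2) $f$ is monotone: if $\boldsymbol{u}\ge\boldsymbol{v}$ coordinate-wise then $f(\boldsymbol{u})\ge f(\boldsymbol{v})$; (3) for every $\tau>0$, the function $f/(\tau L)$ restricted to the domain $[0,\tau]^{|E|}$ is self-bounding.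
   Context: For $S\subseteq E$ and $\boldsymbol{w}\in\mathbb{R}_{\ge0}^{|E|}$, $\boldsymbol{w}_S$ denotes the vector equal to $w_e$ on coordinates $e\in S$ and $0$ elsewhere; $b_{ij}$ is the $j$-th coordinate of $b_i$. A family $\mathcal{F}$ is downward-closed if $S\in\mathcal{F}$ and $T\subseteq S$ imply $T\in\mathcal{F}$. A function $g:\mathcal{X}\to\mathbb{R}$ on a product space $\mathcal{X}=\mathcal{X}_1\times\dots\times\mathcal{X}_n$ is self-bounding if there exist functions $g_i:\mathcal{X}^{(i)}\to\mathbb{R}$, $i\in[n]$, where $\mathcal{X}^{(i)}$ is the product of all factors except the $i$-th and $\boldsymbol{x}^{(i)}$ is $\boldsymbol{x}$ with the $i$-th coordinate removed, such that for all $\boldsymbol{x}$: $0\le g(\boldsymbol{x})-g_i(\boldsymbol{x}^{(i)})\le1$ for every $i$, and $\sum_{i}\big(g(\boldsymbol{x})-g_i(\boldsymbol{x}^{(i)})\big)\le g(\boldsymbol{x})$. *)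

theory Defs
  imports Complex_Main "HOL-Library.FuncSet"
begin

definition downward_closed :: "'e set set \<Rightarrow> bool" where
  "downward_closed F \<longleftrightarrow> (\<forall>S\<in>F. \<forall>T. T \<subseteq> S \<longrightarrow> T \<in> F)"

definition restrict_vec :: "('e \<Rightarrow> real) \<Rightarrow> 'e set \<Rightarrow> 'e \<Rightarrow> real" where
  "restrict_vec w S = (\<lambda>e. if e \<in> S then w e else 0)"

definition inner_E :: "'e set \<Rightarrow> ('e \<Rightarrow> real) \<Rightarrow> ('e \<Rightarrow> real) \<Rightarrow> real" where
  "inner_E E x y = (\<Sum>j\<in>E. x j * y j)"

definition fmax :: "'e set \<Rightarrow> 'e set set \<Rightarrow> nat \<Rightarrow> (nat \<Rightarrow> 'e \<Rightarrow> real) \<Rightarrow> ('e \<Rightarrow> real) \<Rightarrow> real" where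
  "fmax E F l b w = Max {inner_E E (b i) (restrict_vec w S) | S i. S \<in> F \<and> i \<in> {1..l}}"

definition Lconst :: "'e set \<Rightarrow> 'e set set \<Rightarrow> nat \<Rightarrow> (nat \<Rightarrow> 'e \<Rightarrow> real) \<Rightarrow> real" where
  "Lconst E F l b = Max {b i j * (if j \<in> S then 1 else 0) | S i j. S \<in> F \<and> i \<in> {1..l} \<and> j \<in> E}"

definition l1dist :: "'e set \<Rightarrow> ('e \<Rightarrow> real) \<Rightarrow> ('e \<Rightarrow> real) \<Rightarrow> real" where
  "l1dist E u v = (\<Sum>j\<in>E. \<bar>u j - v j\<bar>)"

text \<open>Self-bounding function on the product space PiE I X (coordinates indexed by I).
  x^(i) is x with coordinate i removed, i.e. restrict x (I - {i}) in PiE (I - {i}) X.\<close>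
definition self_bounding :: "'i set \<Rightarrow> ('i \<Rightarrow> 'a set) \<Rightarrow> (('i \<Rightarrow> 'a) \<Rightarrow> real) \<Rightarrow> bool" where
  "self_bounding I X g \<longleftrightarrow>
     (\<exists>G :: 'i \<Rightarrow> ('i \<Rightarrow> 'a) \<Rightarrow> real.
        \<forall>x \<in> PiE I X.
          (\<forall>i\<in>I. 0 \<le> g x - G i (restrict x (I - {i})) \<and> g x - G i (restrict x (I - {i})) \<le> 1)
          \<and> (\<Sum>i\<in>I. g x - G i (restrict x (I - {i}))) \<le> g x)"

end

theory Submission
  imports Defs
begin

text \<open>Every vector a = (b_i)_S is nonnegative with entries at most L, and f(w) is the
  largest of the linear forms w \<mapsto> \<langle>a, w\<rangle>. A maximum of linear forms with coefficients in
  [0, L] is monotone, and L-Lipschitz in the l1 norm because each form is. For self-bounding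
  take g_i(x) = f(x with x_i set to 0), scaled by 1/(\<tau> L): if \<langle>a, x\<rangle> attains f(x), then
  zeroing x_i lowers f by at most a_i x_i \<le> \<tau> L, and these decrements add up to
  \<langle>a, x\<rangle> = f(x).\<close>

definition max_inner :: "'e set \<Rightarrow> ('e \<Rightarrow> real) set \<Rightarrow> ('e \<Rightarrow> real) \<Rightarrow> real" where
  "max_inner E A w = Max ((\<lambda>a. inner_E E a w) ` A)"

lemma inner_E_cong: "(\<And>j. j \<in> E \<Longrightarrow> u j = v j) \<Longrightarrow> inner_E E a u = inner_E E a v"
  unfolding inner_E_def by (intro sum.cong) auto

lemma inner_E_mono:
  assumes "\<forall>j\<in>E. 0 \<le> a j" and "\<forall>j\<in>E. v j \<le> u j"
  shows "inner_E E a v \<le> inner_E E a u"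
  unfolding inner_E_def using assms by (intro sum_mono mult_left_mono) auto

lemma inner_E_diff_le_l1dist:
  assumes "\<forall>j\<in>E. 0 \<le> a j \<and> a j \<le> L"
  shows "inner_E E a u - inner_E E a v \<le> L * l1dist E u v"
proof -
  have "inner_E E a u - inner_E E a v = (\<Sum>j\<in>E. a j * (u j - v j))"
    unfolding inner_E_def by (simp add: sum_subtractf right_diff_distrib)
  also have "\<dots> \<le> (\<Sum>j\<in>E. L * \<bar>u j - v j\<bar>)"
  proof (rule sum_mono)
    fix j assume "j \<in> E"
    then have "0 \<le> a j" "a j \<le> L" using assms by auto
    then have "a j * (u j - v j) \<le> a j * \<bar>u j - v j\<bar>" by (intro mult_left_mono) auto
    also have "\<dots> \<le> L * \<bar>u j - v j\<bar>" using \<open>a j \<le> L\<close> by (intro mult_right_mono) auto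
    finally show "a j * (u j - v j) \<le> L * \<bar>u j - v j\<bar>" .
  qed
  also have "\<dots> = L * l1dist E u v"
    unfolding l1dist_def by (simp add: sum_distrib_left)
  finally show ?thesis .
qed

lemma inner_E_fun_upd_zero:
  assumes "finite E" and "i \<in> E"
  shows "inner_E E a (w(i := 0)) = inner_E E a w - a i * w i"
proof -
  have "inner_E E a (w(i := 0)) = (\<Sum>j\<in>E - {i}. a j * w j)"
    unfolding inner_E_def using assms by (simp add: sum.remove)
  also have "\<dots> = inner_E E a w - a i * w i"
    unfolding inner_E_def using assms by (simp add: sum_diff1)
  finally show ?thesis .
qed

lemma inner_E_le_max_inner:
  "finite A \<Longrightarrow> a \<in> A \<Longrightarrow> inner_E E a w \<le> max_inner E A w"
  unfolding max_inner_def by (intro Max_ge) auto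

lemma max_inner_attained:
  assumes "finite A" and "A \<noteq> {}"
  obtains a where "a \<in> A" and "max_inner E A w = inner_E E a w"
proof -
  have "max_inner E A w \<in> (\<lambda>a. inner_E E a w) ` A"
    unfolding max_inner_def using assms by (intro Max_in) auto
  then show ?thesis using that by blast
qed

lemma max_inner_le:
  assumes "finite A" and "A \<noteq> {}" and "\<And>a. a \<in> A \<Longrightarrow> inner_E E a w \<le> c"
  shows "max_inner E A w \<le> c"
  unfolding max_inner_def using assms by (intro Max.boundedI) auto

lemma max_inner_cong: "(\<And>j. j \<in> E \<Longrightarrow> u j = v j) \<Longrightarrow> max_inner E A u = max_inner E A v"
  unfolding max_inner_def using inner_E_cong[of E u v] by simp

lemma max_inner_mono:
  assumes "finite A" and "A \<noteq> {}" and "\<forall>a\<in>A. \<forall>j\<in>E. 0 \<le> a j"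
    and "\<forall>j\<in>E. v j \<le> u j"
  shows "max_inner E A v \<le> max_inner E A u"
proof (rule max_inner_le[OF assms(1,2)])
  fix a assume "a \<in> A"
  then have "inner_E E a v \<le> inner_E E a u" using assms(3,4) by (intro inner_E_mono) auto
  also have "\<dots> \<le> max_inner E A u" using inner_E_le_max_inner[OF assms(1) \<open>a \<in> A\<close>] .
  finally show "inner_E E a v \<le> max_inner E A u" .
qed

lemma max_inner_lipschitz:
  assumes "finite A" and "A \<noteq> {}" and "\<forall>a\<in>A. \<forall>j\<in>E. 0 \<le> a j \<and> a j \<le> L"
  shows "\<bar>max_inner E A u - max_inner E A v\<bar> \<le> L * l1dist E u v"
proof -
  have half: "max_inner E A u \<le> max_inner E A v + L * l1dist E u v" for u v
  proof (rule max_inner_le[OF assms(1,2)])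
    fix a assume "a \<in> A"
    then have "inner_E E a u - inner_E E a v \<le> L * l1dist E u v"
      using assms(3) by (intro inner_E_diff_le_l1dist) auto
    moreover have "inner_E E a v \<le> max_inner E A v"
      using inner_E_le_max_inner[OF assms(1) \<open>a \<in> A\<close>] .
    ultimately show "inner_E E a u \<le> max_inner E A v + L * l1dist E u v" by linarith
  qed
  have l1dist_commute: "l1dist E v u = l1dist E u v"
    unfolding l1dist_def by (simp add: abs_minus_commute)
  show ?thesis
    unfolding abs_le_iff using half[of u v] half[of v u, unfolded l1dist_commute]
    by (intro conjI) linarith+
qed

lemma max_inner_zero_coordinate:
  assumes "finite E" and "finite A" and "A \<noteq> {}" and "\<forall>a\<in>A. \<forall>j\<in>E. 0 \<le> a j"
    and "\<forall>j\<in>E. 0 \<le> x j" and "a \<in> A" and "max_inner E A x = inner_E E a x" and "i \<in> E"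
  shows "0 \<le> max_inner E A x - max_inner E A (x(i := 0))"
    and "max_inner E A x - max_inner E A (x(i := 0)) \<le> a i * x i"
proof -
  show "0 \<le> max_inner E A x - max_inner E A (x(i := 0))"
    using max_inner_mono[OF assms(2-4), of "x(i := 0)" x] assms(5) by simp
  have "inner_E E a x - a i * x i = inner_E E a (x(i := 0))"
    using inner_E_fun_upd_zero[OF assms(1,8)] by simp
  also have "\<dots> \<le> max_inner E A (x(i := 0))"
    using inner_E_le_max_inner[OF assms(2,6)] .
  finally show "max_inner E A x - max_inner E A (x(i := 0)) \<le> a i * x i"
    using assms(7) by simp
qed

lemma max_inner_self_bounding:
  assumes "finite E" and "finite A" and "A \<noteq> {}"
    and coeffs: "\<forall>a\<in>A. \<forall>j\<in>E. 0 \<le> a j \<and> a j \<le> L" and "L > 0" and "\<tau> > 0"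
  shows "self_bounding E (\<lambda>_. {0..\<tau>}) (\<lambda>x. max_inner E A x / (\<tau> * L))"
proof -
  let ?g = "max_inner E A" and ?c = "\<tau> * L"
  have c_pos: "?c > 0" using assms(5,6) by simp
  have "(\<forall>i\<in>E. 0 \<le> ?g x / ?c - ?g (x(i := 0)) / ?c \<and> ?g x / ?c - ?g (x(i := 0)) / ?c \<le> 1)
      \<and> (\<Sum>i\<in>E. ?g x / ?c - ?g (x(i := 0)) / ?c) \<le> ?g x / ?c"
    if "x \<in> PiE E (\<lambda>_. {0..\<tau>})" for x
  proof -
    have x: "0 \<le> x j" "x j \<le> \<tau>" if "j \<in> E" for j
      using that \<open>x \<in> PiE E (\<lambda>_. {0..\<tau>})\<close> by (auto simp: PiE_iff)
    obtain a where a: "a \<in> A" "?g x = inner_E E a x"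
      using max_inner_attained[OF assms(2,3)] .
    have drop: "0 \<le> ?g x - ?g (x(i := 0))" "?g x - ?g (x(i := 0)) \<le> a i * x i" if "i \<in> E" for i
      using max_inner_zero_coordinate[OF assms(1-3) _ _ a that] coeffs x by auto
    have "a i * x i \<le> ?c" if "i \<in> E" for i
      using coeffs a(1) x that assms(6) by (subst mult.commute) (intro mult_mono, auto)
    with drop have "0 \<le> ?g x - ?g (x(i := 0)) \<and> ?g x - ?g (x(i := 0)) \<le> ?c"
      if "i \<in> E" for i
      using that by (meson order_trans)
    then have "\<forall>i\<in>E. 0 \<le> (?g x - ?g (x(i := 0))) / ?c \<and> (?g x - ?g (x(i := 0))) / ?c \<le> 1"
      using c_pos by (simp add: divide_le_eq_1_pos)
    moreover have "(\<Sum>i\<in>E. ?g x - ?g (x(i := 0))) / ?c \<le> ?g x / ?c"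
      using sum_mono[of E "\<lambda>i. ?g x - ?g (x(i := 0))" "\<lambda>i. a i * x i"] drop(2) a(2) c_pos
      unfolding inner_E_def by (intro divide_right_mono) auto
    ultimately show ?thesis
      by (simp only: diff_divide_distrib[symmetric] sum_divide_distrib[symmetric])
  qed
  moreover have "?g ((restrict x (E - {i}))(i := 0)) = ?g (x(i := 0))" for x i
    by (rule max_inner_cong) auto
  ultimately show ?thesis
    unfolding self_bounding_def by (intro exI[of _ "\<lambda>i y. ?g (y(i := 0)) / ?c"]) simp
qed

definition weight_vectors :: "'e set set \<Rightarrow> nat \<Rightarrow> (nat \<Rightarrow> 'e \<Rightarrow> real) \<Rightarrow> ('e \<Rightarrow> real) set" where
  "weight_vectors F l b = (\<lambda>(S, i). restrict_vec (b i) S) ` (F \<times> {1..l})"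

lemma inner_E_restrict_vec_swap: "inner_E E (restrict_vec a S) w = inner_E E a (restrict_vec w S)"
  unfolding inner_E_def restrict_vec_def by (intro sum.cong) auto

lemma fmax_eq_max_inner: "fmax E F l b = max_inner E (weight_vectors F l b)"
proof
  fix w
  have "{inner_E E (b i) (restrict_vec w S) | S i. S \<in> F \<and> i \<in> {1..l}}
      = (\<lambda>a. inner_E E a w) ` weight_vectors F l b"
    unfolding weight_vectors_def image_image
    by (force simp: inner_E_restrict_vec_swap split: prod.splits)
  then show "fmax E F l b w = max_inner E (weight_vectors F l b) w"
    unfolding fmax_def max_inner_def by simp
qed

lemma finite_weight_vectors: "finite F \<Longrightarrow> finite (weight_vectors F l b)"
  unfolding weight_vectors_def by simp

lemma weight_vectors_nonempty: "F \<noteq> {} \<Longrightarrow> l \<ge> 1 \<Longrightarrow> weight_vectors F l b \<noteq> {}"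
  unfolding weight_vectors_def by auto

lemma finite_Lconst_set:
  fixes l :: nat and b :: "nat \<Rightarrow> 'e \<Rightarrow> real"
  assumes "finite E" and "finite F"
  shows "finite {b i j * (if j \<in> S then 1 else 0) | S i j. S \<in> F \<and> i \<in> {1..l} \<and> j \<in> E}"
    (is "finite ?M")
proof (rule finite_subset)
  show "?M \<subseteq> (\<lambda>(S, i, j). b i j * (if j \<in> S then 1 else 0)) ` (F \<times> {1..l} \<times> E)"
  proof
    fix y assume "y \<in> ?M"
    then obtain S i j where "y = b i j * (if j \<in> S then 1 else 0)" "S \<in> F" "i \<in> {1..l}" "j \<in> E"
      by blast
    then show "y \<in> (\<lambda>(S, i, j). b i j * (if j \<in> S then 1 else 0)) ` (F \<times> {1..l} \<times> E)"
      by (intro image_eqI[where x="(S, i, j)"]) auto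
  qed
qed (use assms in simp)

lemma weight_vectors_bounds:
  assumes "finite E" and "finite F" and "\<forall>i\<in>{1..l}. \<forall>j\<in>E. b i j \<ge> 0"
  shows "\<forall>a\<in>weight_vectors F l b. \<forall>j\<in>E. 0 \<le> a j \<and> a j \<le> Lconst E F l b"
proof (intro ballI)
  fix a j assume "a \<in> weight_vectors F l b" and "j \<in> E"
  then obtain S i where Si: "S \<in> F" "i \<in> {1..l}" "a = restrict_vec (b i) S"
    unfolding weight_vectors_def by auto
  have aj: "a j = b i j * (if j \<in> S then 1 else 0)"
    unfolding Si(3) restrict_vec_def by simp
  have "finite {b i j * (if j \<in> S then 1 else 0) | S i j. S \<in> F \<and> i \<in> {1..l} \<and> j \<in> E}"
    using finite_Lconst_set[OF assms(1,2)] .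
  then have "a j \<le> Lconst E F l b"
    unfolding Lconst_def aj by (rule Max_ge) (use Si(1,2) \<open>j \<in> E\<close> in blast)
  moreover have "0 \<le> a j"
    unfolding aj using Si(2) \<open>j \<in> E\<close> assms(3) by simp
  ultimately show "0 \<le> a j \<and> a j \<le> Lconst E F l b" by simp
qed

theorem proposition5:
  fixes E :: "'e set" and F :: "'e set set" and l :: nat and b :: "nat \<Rightarrow> 'e \<Rightarrow> real"
  assumes finE: "finite E" and Ene: "E \<noteq> {}"
    and FE: "F \<subseteq> Pow E" and Fne: "F \<noteq> {}" and dc: "downward_closed F"
    and l1: "l \<ge> 1"
    and bnn: "\<forall>i\<in>{1..l}. \<forall>j\<in>E. b i j \<ge> 0"
    and Lpos: "Lconst E F l b > 0"
  shows
    "(\<forall>u v. (\<forall>j\<in>E. u j \<ge> 0) \<longrightarrow> (\<forall>j\<in>E. v j \<ge> 0) \<longrightarrow>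
        \<bar>fmax E F l b u - fmax E F l b v\<bar> \<le> Lconst E F l b * l1dist E u v)
     \<and> (\<forall>u v. (\<forall>j\<in>E. v j \<ge> 0) \<longrightarrow> (\<forall>j\<in>E. u j \<ge> v j) \<longrightarrow>
        fmax E F l b u \<ge> fmax E F l b v)
     \<and> (\<forall>\<tau>::real. \<tau> > 0 \<longrightarrow>
        self_bounding E (\<lambda>_. {0..\<tau>}) (\<lambda>x. fmax E F l b x / (\<tau> * Lconst E F l b)))"
proof -
  let ?A = "weight_vectors F l b" and ?L = "Lconst E F l b"
  have finF: "finite F" using finE FE by (meson finite_Pow_iff finite_subset)
  have finA: "finite ?A" and neA: "?A \<noteq> {}"
    using finite_weight_vectors[OF finF] weight_vectors_nonempty[OF Fne l1] by blast+
  have bounds: "\<forall>a\<in>?A. \<forall>j\<in>E. 0 \<le> a j \<and> a j \<le> ?L"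
    using weight_vectors_bounds[OF finE finF bnn] .
  show ?thesis
    unfolding fmax_eq_max_inner
  proof (intro conjI allI impI)
    fix u v :: "'e \<Rightarrow> real"
    show "\<bar>max_inner E ?A u - max_inner E ?A v\<bar> \<le> ?L * l1dist E u v"
      by (rule max_inner_lipschitz[OF finA neA bounds])
  next
    fix u v :: "'e \<Rightarrow> real"
    assume "\<forall>j\<in>E. v j \<le> u j"
    then show "max_inner E ?A v \<le> max_inner E ?A u"
      using max_inner_mono[OF finA neA] bounds by blast
  next
    fix \<tau> :: real assume "\<tau> > 0"
    then show "self_bounding E (\<lambda>_. {0..\<tau>}) (\<lambda>x. max_inner E ?A x / (\<tau> * ?L))"
      by (rule max_inner_self_bounding[OF finE finA neA bounds Lpos])
  qed
qed

end
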